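(* Let $n\ge2$, $\nu\in\mathcal{F}_{C_n}$, $1\le k\le n$ and $\alpha$ a formula. Then: (1) if $\nu(\alpha)=T_n$ then $\nu(\alpha^k)=T_n$; (2) if $\nu(\alpha)=t^n_i$ for some $0\le i\le k-2$ then $\nu(\alpha^k)=T_n$; (3) if $\nu(\alpha)=t^n_{k-1}$ then $\nu(\alpha^k)=F_n$; (4) if $\nu(\alpha)=t^n_i$ for some $k\le i\le n-1$ then $\nu(\alpha^k)=t^n_{i-k}$; (5) if $\nu(\alpha)=F_n$ then $\nu(\alpha^k)=T_n$.
   Context: $\Sigma$ has unary $\neg$ and binary $\wedge,\vee,\to$; formulas over a denumerable set of variables; $\alpha^0=\alpha$, $\alpha^{k+1}=\neg(\alpha^k\wedge\neg\alpha^k)$. Fix $n\ge2$. $B_n=\{z\in\{0,1\}^{n+1}:(z_1\wedge\dots\wedge z_k)\vee z_{k+1}=1\text{ for all }1\le k\le n\}$; its elements are $T_n=(1,0,1,\dots,1)$, $t^n_i$ ($0\le i\le n-2$) the tuple with $z_1=z_2=1$ and a single $0$ at coordinate $i+3$, $t^n_{n-1}=(1,\dots,1)$, and $F_n=(0,1,\dots,1)$. $D_n=\{z\in B_n:z_1=1\}$, $Boo_n=\{T_n,F_n\}$, $I_n=B_n\setminus Boo_n$. The multialgebra $\mathcal{A}_{C_n}$ on $B_n$: $\tilde\neg z=\{w\in B_n:w_1=z_2,\ w_2\le z_1\}$; for $\#\in\{\wedge,\vee,\to\}$, $z\tilde\#w=\{u\in Boo_n:u_1=z_1\#w_1\}$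 if $z,w\in Boo_n$, and $\{u\in B_n:u_1=z_1\#w_1\}$ otherwise ($\#$ on $\{0,1\}$ Boolean). A valuation is a map $\nu$ from formulas to $B_n$ with $\nu(\neg\alpha)\in\tilde\neg\nu(\alpha)$ and $\nu(\alpha\#\beta)\in\nu(\alpha)\tilde\#\nu(\beta)$. $\mathcal{F}_{C_n}$ is the set of valuations such that for every $\alpha$: $\nu(\alpha)=t^n_0$ implies $\nu(\alpha\wedge\neg\alpha)=T_n$; and for $1\le k\le n-1$, $\nu(\alpha)=t^n_k$ implies $\nu(\alpha\wedge\neg\alpha)\in I_n$ and $\nu(\alpha^1)=t^n_{k-1}$. *)

theory Defs
  imports Main
begin

datatype fmla = Var nat | Neg fmla | And fmla fmla | Or fmla fmla | Imp fmla fmla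

fun fpow :: "fmla \<Rightarrow> nat \<Rightarrow> fmla" where
  "fpow a 0 = a"
| "fpow a (Suc k) = Neg (And (fpow a k) (Neg (fpow a k)))"

(* Elements of {0,1}^(n+1) are bool lists of length n+1; coordinate z_j is z ! (j-1). *)
definition Bn :: "nat \<Rightarrow> bool list set" where
  "Bn n = {z. length z = n + 1 \<and>
              (\<forall>k. 1 \<le> k \<and> k \<le> n \<longrightarrow> (\<forall>j<k. z ! j) \<or> z ! k)}"

definition Tn :: "nat \<Rightarrow> bool list" where
  "Tn n = True # False # replicate (n - 1) True"

definition Fn :: "nat \<Rightarrow> bool list" where
  "Fn n = False # replicate n True"

(* t^n_i: for i \<le> n-2, z_1 = z_2 = 1 and a single 0 at coordinate i+3 (index i+2);
   t^n_{n-1} is the all-ones tuple *)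
definition tn :: "nat \<Rightarrow> nat \<Rightarrow> bool list" where
  "tn n i = (if i \<le> n - 2 then (replicate (n + 1) True)[i + 2 := False]
             else replicate (n + 1) True)"

definition Dn :: "nat \<Rightarrow> bool list set" where
  "Dn n = {z \<in> Bn n. z ! 0}"

definition Boo :: "nat \<Rightarrow> bool list set" where
  "Boo n = {Tn n, Fn n}"

definition In :: "nat \<Rightarrow> bool list set" where
  "In n = Bn n - Boo n"

definition negM :: "nat \<Rightarrow> bool list \<Rightarrow> bool list set" where
  "negM n z = {w \<in> Bn n. w ! 0 = z ! 1 \<and> (w ! 1 \<longrightarrow> z ! 0)}"

definition binM :: "nat \<Rightarrow> (bool \<Rightarrow> bool \<Rightarrow> bool) \<Rightarrow> bool list \<Rightarrow> bool list \<Rightarrow> bool list set" where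
  "binM n f z w = (if z \<in> Boo n \<and> w \<in> Boo n
                   then {u \<in> Boo n. u ! 0 = f (z ! 0) (w ! 0)}
                   else {u \<in> Bn n. u ! 0 = f (z ! 0) (w ! 0)})"

definition valuation :: "nat \<Rightarrow> (fmla \<Rightarrow> bool list) \<Rightarrow> bool" where
  "valuation n v \<longleftrightarrow>
     (\<forall>a. v a \<in> Bn n) \<and>
     (\<forall>a. v (Neg a) \<in> negM n (v a)) \<and>
     (\<forall>a b. v (And a b) \<in> binM n (\<and>) (v a) (v b)) \<and>
     (\<forall>a b. v (Or a b) \<in> binM n (\<or>) (v a) (v b)) \<and>
     (\<forall>a b. v (Imp a b) \<in> binM n (\<longrightarrow>) (v a) (v b))"

definition FC :: "nat \<Rightarrow> (fmla \<Rightarrow> bool list) set" where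
  "FC n = {v. valuation n v \<and>
     (\<forall>a. (v a = tn n 0 \<longrightarrow> v (And a (Neg a)) = Tn n) \<and>
          (\<forall>k. 1 \<le> k \<and> k \<le> n - 1 \<longrightarrow> v a = tn n k \<longrightarrow>
               v (And a (Neg a)) \<in> In n \<and> v (fpow a 1) = tn n (k - 1)))}"

end

theory Submission
  imports Defs
begin

text \<open>One application of \<open>\<alpha> \<mapsto> \<alpha>\<^sup>1\<close> moves \<open>t\<^sub>i\<close> (\<open>i \<ge> 1\<close>) down to
  \<open>t\<^bsub>i-1\<^esub>\<close> by the defining condition of \<open>FC n\<close>; it turns \<open>t\<^sub>0\<close> into \<open>F\<^sub>n\<close>, since
  then \<open>\<alpha> \<and> \<not>\<alpha>\<close> is forced to be \<open>T\<^sub>n\<close>; and it turns a Boolean value into \<open>T\<^sub>n\<close>,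
  since the operations are classical on \<open>{T\<^sub>n, F\<^sub>n}\<close>, making \<open>\<alpha> \<and> \<not>\<alpha>\<close> equal to \<open>F\<^sub>n\<close>.\<close>

lemma Tn_nth [simp]: "Tn n ! 0" "\<not> Tn n ! Suc 0"
  by (simp_all add: Tn_def)

lemma Fn_nth [simp]: "\<not> Fn n ! 0" "n \<ge> 1 \<Longrightarrow> Fn n ! Suc 0"
  by (simp_all add: Fn_def)

lemma Bn_eq_Fn_if_not_nth0:
  assumes "w \<in> Bn n" "\<not> w ! 0"
  shows "w = Fn n"
proof (rule nth_equalityI)
  show "length w = length (Fn n)" using assms by (simp add: Bn_def Fn_def)
  fix j assume j: "j < length w"
  show "w ! j = Fn n ! j"
  proof (cases j)
    case (Suc m)
    have "(\<forall>j'<j. w ! j') \<or> w ! j" using assms j Suc by (auto simp: Bn_def)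
    then have "w ! j" using assms Suc by auto
    moreover have "Fn n ! j" using Suc j assms by (auto simp: Fn_def Bn_def)
    ultimately show ?thesis by simp
  qed (use assms in simp)
qed

lemma Bn_eq_Tn_if_nth0_not_nth1:
  assumes "n \<ge> 1" "w \<in> Bn n" "w ! 0" "\<not> w ! 1"
  shows "w = Tn n"
proof (rule nth_equalityI)
  show "length w = length (Tn n)" using assms by (simp add: Bn_def Tn_def)
  fix j assume j: "j < length w"
  show "w ! j = Tn n ! j"
  proof (cases "j \<le> 1")
    case True
    then show ?thesis using assms by (cases j) auto
  next
    case False
    have "(\<forall>j'<j. w ! j') \<or> w ! j" using assms j False by (auto simp: Bn_def)
    then have "w ! j" using assms False by auto
    moreover have "Tn n ! j" using j False assms by (auto simp: Tn_def Bn_def nth_Cons')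
    ultimately show ?thesis by simp
  qed
qed

lemma fpow_add: "fpow a (m + j) = fpow (fpow a j) m"
  by (induction m) auto

lemma valuation_Neg_Tn:
  assumes "valuation n v" "v b = Tn n"
  shows "v (Neg b) = Fn n"
proof -
  have "v (Neg b) \<in> negM n (v b)" using assms unfolding valuation_def by metis
  then show ?thesis using assms Bn_eq_Fn_if_not_nth0 by (auto simp: negM_def)
qed

lemma valuation_Neg_Fn:
  assumes "valuation n v" "n \<ge> 1" "v b = Fn n"
  shows "v (Neg b) = Tn n"
proof -
  have "v (Neg b) \<in> negM n (v b)" using assms unfolding valuation_def by metis
  then show ?thesis using assms Bn_eq_Tn_if_nth0_not_nth1 by (auto simp: negM_def)
qed

lemma valuation_And_Boo_false:
  assumes "valuation n v" "v b \<in> Boo n" "v c \<in> Boo n" "\<not> (v b ! 0 \<and> v c ! 0)"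
  shows "v (And b c) = Fn n"
proof -
  have "v (And b c) \<in> binM n (\<and>) (v b) (v c)" using assms unfolding valuation_def by metis
  then show ?thesis using assms by (auto simp: binM_def Boo_def)
qed

lemma valuation_consistency_Boo:
  assumes "valuation n v" "n \<ge> 1" "v b \<in> Boo n"
  shows "v (Neg (And b (Neg b))) = Tn n"
proof -
  have "v b = Tn n \<and> v (Neg b) = Fn n \<or> v b = Fn n \<and> v (Neg b) = Tn n"
    using assms valuation_Neg_Tn[OF assms(1)] valuation_Neg_Fn[OF assms(1,2)]
    by (auto simp: Boo_def)
  then have "v (And b (Neg b)) = Fn n"
    using valuation_And_Boo_false[OF assms(1)] by (auto simp: Boo_def)
  then show ?thesis using valuation_Neg_Fn assms by blast
qed

lemma valuation_fpow_Boo: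
  assumes "valuation n v" "n \<ge> 1" "v b \<in> Boo n" "m \<ge> 1"
  shows "v (fpow b m) = Tn n"
  using assms(4)
proof (induction m rule: dec_induct)
  case base
  show ?case using valuation_consistency_Boo assms by simp
next
  case (step m)
  then have "v (fpow b m) \<in> Boo n" by (simp add: Boo_def)
  then show ?case using valuation_consistency_Boo assms by simp
qed

lemma FC_valuation: "v \<in> FC n \<Longrightarrow> valuation n v"
  by (simp add: FC_def)

lemma FC_fpow_tn_descend:
  assumes "v \<in> FC n" "i \<le> n - 1" "v a = tn n i" "j \<le> i"
  shows "v (fpow a j) = tn n (i - j)"
  using assms(4)
proof (induction j)
  case 0
  show ?case using assms by simp
next
  case (Suc j)
  then have "v (fpow a j) = tn n (i - j)" and "1 \<le> i - j" "i - j \<le> n - 1"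
    using assms(2) by simp_all
  then have "v (fpow (fpow a j) 1) = tn n (i - j - 1)"
    using assms(1) by (simp add: FC_def)
  then show ?case by (simp add: diff_Suc)
qed

lemma FC_fpow_tn_Fn:
  assumes "v \<in> FC n" "i \<le> n - 1" "v a = tn n i"
  shows "v (fpow a (Suc i)) = Fn n"
proof -
  have "v (fpow a i) = tn n 0" using FC_fpow_tn_descend[OF assms, of i] by simp
  then have "v (And (fpow a i) (Neg (fpow a i))) = Tn n" using assms(1) by (simp add: FC_def)
  then show ?thesis using valuation_Neg_Tn FC_valuation[OF assms(1)] by simp
qed

theorem mainTheorem10:
  fixes n k :: nat and v :: "fmla \<Rightarrow> bool list" and a :: fmla
  assumes "n \<ge> 2" and "v \<in> FC n" and "1 \<le> k" and "k \<le> n"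
  shows "(v a = Tn n \<longrightarrow> v (fpow a k) = Tn n) \<and>
         (\<forall>i. i + 2 \<le> k \<and> v a = tn n i \<longrightarrow> v (fpow a k) = Tn n) \<and>
         (v a = tn n (k - 1) \<longrightarrow> v (fpow a k) = Fn n) \<and>
         (\<forall>i. k \<le> i \<and> i \<le> n - 1 \<and> v a = tn n i \<longrightarrow> v (fpow a k) = tn n (i - k)) \<and>
         (v a = Fn n \<longrightarrow> v (fpow a k) = Tn n)"
proof -
  have val: "valuation n v" and n1: "n \<ge> 1" using assms FC_valuation by auto
  have boolean: "v a \<in> Boo n \<Longrightarrow> v (fpow a k) = Tn n"
    using valuation_fpow_Boo[OF val n1] assms by blast
  have below: "v (fpow a k) = Tn n" if "i + 2 \<le> k" "v a = tn n i" for i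
  proof -
    have "v (fpow a (Suc i)) \<in> Boo n"
      using FC_fpow_tn_Fn[OF assms(2)] that assms by (simp add: Boo_def)
    then have "v (fpow (fpow a (Suc i)) (k - Suc i)) = Tn n"
      using valuation_fpow_Boo[OF val n1] that by simp
    then show ?thesis using fpow_add[of a "k - Suc i" "Suc i"] that by simp
  qed
  have at: "v a = tn n (k - 1) \<Longrightarrow> v (fpow a k) = Fn n"
    using FC_fpow_tn_Fn[OF assms(2), of "k - 1"] assms by simp
  show ?thesis
    using boolean below at FC_fpow_tn_descend[OF assms(2)] by (auto simp: Boo_def)
qed

end
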